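(* Let $V$ be a $K$-vector space and let $Moor(V)=V\otimes S(V)$ be the free $Moor$-algebra over $V$, with product determined by $(v\otimes\omega)\prec(v'\otimes 1)=v\otimes(\omega\vee v')$ and $(v\otimes\omega)\prec(v'\otimes\omega')=0$ for $\omega'\in S^n(V)$, $n\geq 1$, graded by $Moor(V)_n=V\otimes S^{n-1}(V)$ for $n\geq 1$. Then $Moor(V)$ can be equipped with a cooperation making it a connected $Moor$-bialgebra.
   Context: $K$ is a field of characteristic zero; $S(V)=K\oplus\bigoplus_{n>0}S^n(V)$ is the symmetric algebra with product $\vee$, and $1\in K=S^0(V)$; $\tau$ is the flip map. A $Moor$-bialgebra is a graded vector space $\mathcal{H}=\bigoplus_{p>0}\mathcal{H}_p$ with a bilinear operation $\prec$ satisfying $\mathcal{H}_p\prec\mathcal{H}_q\subseteq\mathcal{H}_{p+q}$, $(x\prec y)\prec z=(x\prec z)\prec y$ and $x\prec(y\prec z)=0$, together with a linear map $\Delta:\mathcal{H}\to\mathcal{H}\otimes\mathcal{H}$ (Sweedler notation $\Delta(x)=x_{(1)}\otimes x_{(2)}$) satisfying $(\mathrm{id}\otimes\Delta)\Delta=0$, $(\Delta\otimes\mathrm{id})\Delta=(\mathrm{id}\otimes\tau)(\Delta\otimes\mathrm{id})\Delta$, and $\Delta(x\prec y)=x\otimes e(y)+(x_{(1)}\prec y)\otimes x_{(2)}$ for all $x,y$, where $e:\mathcal{H}\to\mathcal{H}_1$ is the canonical projection. Set $\Delta^{(1)}=\Delta$ and $\Delta^{(r)}=(\Delta\otimes\mathrm{id}^{\otimes(r-1)})\Delta^{(r-1)}$.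 The $Moor$-bialgebra is connected if $\ker\Delta\subseteq\mathcal{H}_1$ and $\mathcal{H}=\bigcup_{r\geq 1}\ker\Delta^{(r)}$. *)

theory Defs
  imports "HOL-Library.Poly_Mapping" "HOL-Library.Multiset"
begin

(* A vector space with basis 'a over the field 'k is modelled as 'a <Rightarrow><^sub>0 'k.
  Tensor powers of such a space are modelled as ('a list <Rightarrow><^sub>0 'k): the n-th tensor power
  is spanned by lists of basis elements of length n. *)

definition smult :: "'k::field \<Rightarrow> ('a \<Rightarrow>\<^sub>0 'k) \<Rightarrow> ('a \<Rightarrow>\<^sub>0 'k)" where
  "smult c x = Poly_Mapping.map (\<lambda>v. c * v) x"

definition lin_ext :: "('a \<Rightarrow> ('b \<Rightarrow>\<^sub>0 'k::field)) \<Rightarrow> ('a \<Rightarrow>\<^sub>0 'k) \<Rightarrow> ('b \<Rightarrow>\<^sub>0 'k)" where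
  "lin_ext f x = (\<Sum>a\<in>Poly_Mapping.keys x. smult (Poly_Mapping.lookup x a) (f a))"

definition basis_vec :: "'a \<Rightarrow> ('a \<Rightarrow>\<^sub>0 'k::field)" where
  "basis_vec a = Poly_Mapping.single a 1"

definition linear_map :: "(('a \<Rightarrow>\<^sub>0 'k::field) \<Rightarrow> ('b \<Rightarrow>\<^sub>0 'k)) \<Rightarrow> bool" where
  "linear_map f \<longleftrightarrow> (\<forall>x y. f (x + y) = f x + f y) \<and> (\<forall>c x. f (smult c x) = smult c (f x))"

definition bilinear_op :: "(('a \<Rightarrow>\<^sub>0 'k::field) \<Rightarrow> ('a \<Rightarrow>\<^sub>0 'k) \<Rightarrow> ('a \<Rightarrow>\<^sub>0 'k)) \<Rightarrow> bool" where
  "bilinear_op p \<longleftrightarrow> (\<forall>y. linear_map (\<lambda>x. p x y)) \<and> (\<forall>x. linear_map (\<lambda>y. p x y))"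

definition tprod :: "('a list \<Rightarrow>\<^sub>0 'k::field) \<Rightarrow> ('a list \<Rightarrow>\<^sub>0 'k) \<Rightarrow> ('a list \<Rightarrow>\<^sub>0 'k)" where
  "tprod t u = lin_ext (\<lambda>as. lin_ext (\<lambda>bs. basis_vec (as @ bs)) u) t"

definition tens1 :: "('a \<Rightarrow>\<^sub>0 'k::field) \<Rightarrow> ('a list \<Rightarrow>\<^sub>0 'k)" where
  "tens1 x = lin_ext (\<lambda>a. basis_vec [a]) x"

definition tens2 :: "('a \<Rightarrow>\<^sub>0 'k::field) \<Rightarrow> ('a \<Rightarrow>\<^sub>0 'k) \<Rightarrow> ('a list \<Rightarrow>\<^sub>0 'k)" where
  "tens2 x y = tprod (tens1 x) (tens1 y)"

(* For an order-n tensor with n <ge> 1: apply f (H <rightarrow> H<otimes>H) to the first factor,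
  i.e. (f <otimes> id^{<otimes>(n-1)}). *)
definition on_first :: "(('a \<Rightarrow>\<^sub>0 'k::field) \<Rightarrow> ('a list \<Rightarrow>\<^sub>0 'k)) \<Rightarrow> ('a list \<Rightarrow>\<^sub>0 'k) \<Rightarrow> ('a list \<Rightarrow>\<^sub>0 'k)" where
  "on_first f t = lin_ext (\<lambda>as. tprod (f (basis_vec (hd as))) (basis_vec (tl as))) t"

definition on_second :: "(('a \<Rightarrow>\<^sub>0 'k::field) \<Rightarrow> ('a list \<Rightarrow>\<^sub>0 'k)) \<Rightarrow> ('a list \<Rightarrow>\<^sub>0 'k) \<Rightarrow> ('a list \<Rightarrow>\<^sub>0 'k)" where
  "on_second f t = lin_ext (\<lambda>as. tprod (basis_vec [as ! 0]) (f (basis_vec (as ! 1)))) t"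

definition on_first1 :: "(('a \<Rightarrow>\<^sub>0 'k::field) \<Rightarrow> ('a \<Rightarrow>\<^sub>0 'k)) \<Rightarrow> ('a list \<Rightarrow>\<^sub>0 'k) \<Rightarrow> ('a list \<Rightarrow>\<^sub>0 'k)" where
  "on_first1 g t = lin_ext (\<lambda>as. tens2 (g (basis_vec (as ! 0))) (basis_vec (as ! 1))) t"

definition flip23 :: "('a list \<Rightarrow>\<^sub>0 'k::field) \<Rightarrow> ('a list \<Rightarrow>\<^sub>0 'k)" where
  "flip23 t = lin_ext (\<lambda>as. basis_vec [as ! 0, as ! 2, as ! 1]) t"

(* Iterated coproduct: <Delta>^(1) = <Delta>, <Delta>^(r+1) = (<Delta> <otimes> id^{<otimes> r}) <Delta>^(r). *)
definition iter_cop :: "(('a \<Rightarrow>\<^sub>0 'k::field) \<Rightarrow> ('a list \<Rightarrow>\<^sub>0 'k)) \<Rightarrow> nat \<Rightarrow> ('a \<Rightarrow>\<^sub>0 'k) \<Rightarrow> ('a list \<Rightarrow>\<^sub>0 'k)" where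
  "iter_cop D r x = (on_first D ^^ (r - 1)) (D x)"

(* Graded space <Oplus>_{p>0} H_p with a homogeneous basis 'a, deg :: 'a <Rightarrow> nat. *)
definition homog :: "('a \<Rightarrow> nat) \<Rightarrow> nat \<Rightarrow> ('a \<Rightarrow>\<^sub>0 'k::field) set" where
  "homog deg p = {x. \<forall>a\<in>Poly_Mapping.keys x. deg a = p}"

definition proj1 :: "('a \<Rightarrow> nat) \<Rightarrow> ('a \<Rightarrow>\<^sub>0 'k::field) \<Rightarrow> ('a \<Rightarrow>\<^sub>0 'k)" where
  "proj1 deg x = lin_ext (\<lambda>a. if deg a = 1 then basis_vec a else 0) x"

definition moor_bialgebra ::
  "('a \<Rightarrow> nat) \<Rightarrow> (('a \<Rightarrow>\<^sub>0 'k::field) \<Rightarrow> ('a \<Rightarrow>\<^sub>0 'k) \<Rightarrow> ('a \<Rightarrow>\<^sub>0 'k))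
     \<Rightarrow> (('a \<Rightarrow>\<^sub>0 'k) \<Rightarrow> ('a list \<Rightarrow>\<^sub>0 'k)) \<Rightarrow> bool" where
  "moor_bialgebra deg pr D \<longleftrightarrow>
     (\<forall>a. deg a > 0) \<and>
     bilinear_op pr \<and>
     (\<forall>p q x y. x \<in> homog deg p \<longrightarrow> y \<in> homog deg q \<longrightarrow> pr x y \<in> homog deg (p + q)) \<and>
     (\<forall>x y z. pr (pr x y) z = pr (pr x z) y) \<and>
     (\<forall>x y z. pr x (pr y z) = 0) \<and>
     linear_map D \<and>
     (\<forall>x. \<forall>as\<in>Poly_Mapping.keys (D x). length as = 2) \<and>
     (\<forall>x. on_second D (D x) = 0) \<and>
     (\<forall>x. on_first D (D x) = flip23 (on_first D (D x))) \<and>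
     (\<forall>x y. D (pr x y) = tens2 x (proj1 deg y) + on_first1 (\<lambda>u. pr u y) (D x))"

definition connected_moor_bialgebra ::
  "('a \<Rightarrow> nat) \<Rightarrow> (('a \<Rightarrow>\<^sub>0 'k::field) \<Rightarrow> ('a \<Rightarrow>\<^sub>0 'k) \<Rightarrow> ('a \<Rightarrow>\<^sub>0 'k))
     \<Rightarrow> (('a \<Rightarrow>\<^sub>0 'k) \<Rightarrow> ('a list \<Rightarrow>\<^sub>0 'k)) \<Rightarrow> bool" where
  "connected_moor_bialgebra deg pr D \<longleftrightarrow>
     moor_bialgebra deg pr D \<and>
     (\<forall>x. D x = 0 \<longrightarrow> x \<in> homog deg 1) \<and>
     (\<forall>x. \<exists>r\<ge>1. iter_cop D r x = 0)"

(* S(V) has basis the multisets over 'b (monomials), so V <otimes> S(V) has basis 'b <times> 'b multiset;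
  the basis element (v, m) lies in V <otimes> S^{size m}(V), i.e. in Moor(V)_{size m + 1}. *)
definition moor_deg :: "'b \<times> 'b multiset \<Rightarrow> nat" where
  "moor_deg a = size (snd a) + 1"

definition moor_basis_prod :: "'b \<times> 'b multiset \<Rightarrow> 'b \<times> 'b multiset \<Rightarrow> ('b \<times> 'b multiset \<Rightarrow>\<^sub>0 'k::field)" where
  "moor_basis_prod a a' =
     (if snd a' = {#} then basis_vec (fst a, snd a + {#fst a'#}) else 0)"

definition moor_prod :: "('b \<times> 'b multiset \<Rightarrow>\<^sub>0 'k::field) \<Rightarrow> ('b \<times> 'b multiset \<Rightarrow>\<^sub>0 'k) \<Rightarrow> ('b \<times> 'b multiset \<Rightarrow>\<^sub>0 'k)" where
  "moor_prod x y = lin_ext (\<lambda>a. lin_ext (\<lambda>a'. moor_basis_prod a a') y) x"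

end

theory Submission
  imports Defs
begin

text \<open>
  The cooperation removes one factor from the monomial:
  \<open>\<Delta>(v \<otimes> \<omega>) = \<Sum>\<^sub>w c\<^sub>w (v \<otimes> \<omega>/w) \<otimes> (w \<otimes> 1)\<close>, summed over the distinct
  factors \<open>w\<close> of \<open>\<omega>\<close> with multiplicities \<open>c\<^sub>w\<close>.  Its second tensor factor always has
  degree 1, where \<open>\<Delta>\<close> vanishes, so \<open>(id \<otimes> \<Delta>)\<Delta> = 0\<close>; applying \<open>\<Delta>\<close> twice removes two
  factors, with a coefficient independent of their order, which is the twisted coassociativity.
  Compatibility with \<open>\<prec>\<close> is a Leibniz rule: the factor \<open>v'\<close> appended by
  \<open>(v \<otimes> \<omega>) \<prec> (v' \<otimes> 1)\<close> is either the one removed, giving \<open>x \<otimes> e(y)\<close>, or it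
  survives, giving \<open>(x_(1) \<prec> y) \<otimes> x_(2)\<close>.  Each application of \<open>\<Delta>\<close> lowers the degree of
  the first tensor factor, so iterated coproducts vanish; in characteristic zero the
  multiplicities \<open>c\<^sub>w\<close> are nonzero, so the kernel of \<open>\<Delta>\<close> lies in degree 1.
\<close>

lemma lookup_smult [simp]: "Poly_Mapping.lookup (smult c x) k = c * Poly_Mapping.lookup x k"
  by (simp add: smult_def map.rep_eq when_def)

lemma smult_add_right: "smult c (x + y) = smult c x + smult c y"
  by (rule poly_mapping_eqI) (simp add: lookup_add algebra_simps)

lemma smult_add_left: "smult (a + b) x = smult a x + smult b x"
  by (rule poly_mapping_eqI) (simp add: lookup_add algebra_simps)

lemma smult_zero_left [simp]: "smult 0 x = 0"
  by (rule poly_mapping_eqI) simp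

lemma smult_zero_right [simp]: "smult c 0 = 0"
  by (rule poly_mapping_eqI) simp

lemma smult_one [simp]: "smult 1 x = x"
  by (rule poly_mapping_eqI) simp

lemma smult_smult [simp]: "smult a (smult b x) = smult (a * b) x"
  by (rule poly_mapping_eqI) simp

lemma smult_sum: "smult c (sum f S) = (\<Sum>i\<in>S. smult c (f i))"
  by (rule poly_mapping_eqI) (simp add: lookup_sum sum_distrib_left)

lemma keys_smult: "Poly_Mapping.keys (smult c x) \<subseteq> Poly_Mapping.keys x"
  by (auto simp: in_keys_iff)

lemma lookup_basis_vec: "Poly_Mapping.lookup (basis_vec a) k = (if a = k then 1 else 0)"
  by (simp add: basis_vec_def lookup_single when_def)

lemma keys_basis_vec [simp]: "Poly_Mapping.keys (basis_vec a :: 'a \<Rightarrow>\<^sub>0 'k::field) = {a}"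
  by (simp add: basis_vec_def)

lemma lin_ext_superset:
  assumes "finite S" "Poly_Mapping.keys x \<subseteq> S"
  shows "lin_ext f x = (\<Sum>a\<in>S. smult (Poly_Mapping.lookup x a) (f a))"
  unfolding lin_ext_def
  by (rule sum.mono_neutral_left) (use assms in \<open>auto simp: in_keys_iff\<close>)

lemma lin_ext_add: "lin_ext f (x + y) = lin_ext f x + lin_ext f y"
proof -
  let ?S = "Poly_Mapping.keys x \<union> Poly_Mapping.keys y"
  have "lin_ext f (x + y) = (\<Sum>a\<in>?S. smult (Poly_Mapping.lookup (x + y) a) (f a))"
    by (rule lin_ext_superset) (auto dest: keys_add[THEN subsetD])
  also have "\<dots> = (\<Sum>a\<in>?S. smult (Poly_Mapping.lookup x a) (f a))
                 + (\<Sum>a\<in>?S. smult (Poly_Mapping.lookup y a) (f a))"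
    by (simp add: lookup_add smult_add_left sum.distrib)
  also have "\<dots> = lin_ext f x + lin_ext f y"
    by (subst (1 2) lin_ext_superset[symmetric]) auto
  finally show ?thesis .
qed

lemma lin_ext_smult: "lin_ext f (smult c x) = smult c (lin_ext f x)"
proof -
  have "lin_ext f (smult c x)
      = (\<Sum>a\<in>Poly_Mapping.keys x. smult (Poly_Mapping.lookup (smult c x) a) (f a))"
    by (rule lin_ext_superset) (auto simp: in_keys_iff)
  then show ?thesis by (simp add: lin_ext_def smult_sum)
qed

lemma linear_lin_ext: "linear_map (lin_ext f)"
  by (simp add: linear_map_def lin_ext_add lin_ext_smult)

lemma lin_ext_basis_vec [simp]: "lin_ext f (basis_vec a) = f a"
  by (simp add: lin_ext_def basis_vec_def)

lemma lin_ext_zero [simp]: "lin_ext f 0 = 0"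
  by (simp add: lin_ext_def)

lemma lin_ext_zero_fun [simp]: "lin_ext (\<lambda>a. 0) x = 0"
  by (simp add: lin_ext_def)

lemma lookup_lin_ext:
  "Poly_Mapping.lookup (lin_ext f x) b
     = (\<Sum>a\<in>Poly_Mapping.keys x. Poly_Mapping.lookup x a * Poly_Mapping.lookup (f a) b)"
  by (simp add: lin_ext_def lookup_sum)

lemma keys_lin_ext:
  "Poly_Mapping.keys (lin_ext f x) \<subseteq> (\<Union>a\<in>Poly_Mapping.keys x. Poly_Mapping.keys (f a))"
  unfolding lin_ext_def using keys_sum keys_smult by fastforce

lemma lin_ext_basis_vec_id: "lin_ext basis_vec x = x"
proof (rule poly_mapping_eqI)
  fix k
  have "Poly_Mapping.lookup (lin_ext basis_vec x) k
      = (\<Sum>a\<in>Poly_Mapping.keys x. if a = k then Poly_Mapping.lookup x a else 0)"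
    unfolding lookup_lin_ext lookup_basis_vec by (rule sum.cong) auto
  then show "Poly_Mapping.lookup (lin_ext basis_vec x) k = Poly_Mapping.lookup x k"
    by (simp add: sum.delta in_keys_iff)
qed

lemma linear_map_smult: "linear_map f \<Longrightarrow> f (smult c x) = smult c (f x)"
  unfolding linear_map_def by blast

lemma linear_map_zero: "linear_map f \<Longrightarrow> f 0 = 0"
  unfolding linear_map_def by (metis add_cancel_right_right)

lemma linear_map_sum: "linear_map f \<Longrightarrow> f (sum g S) = (\<Sum>i\<in>S. f (g i))"
  by (induction S rule: infinite_finite_induct) (auto simp: linear_map_zero linear_map_def)

lemma linear_map_lin_ext: "linear_map g \<Longrightarrow> g (lin_ext f x) = lin_ext (\<lambda>a. g (f a)) x"
  by (simp add: lin_ext_def linear_map_sum linear_map_smult)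

lemma linear_map_comp: "linear_map f \<Longrightarrow> linear_map g \<Longrightarrow> linear_map (\<lambda>x. f (g x))"
  by (simp add: linear_map_def)

lemma linear_map_add: "linear_map f \<Longrightarrow> linear_map g \<Longrightarrow> linear_map (\<lambda>x. f x + g x)"
  by (simp add: linear_map_def smult_add_right)

lemma linear_map_const_zero: "linear_map (\<lambda>x. 0)"
  by (simp add: linear_map_def)

lemma linear_map_lin_ext_fun:
  "(\<And>a. linear_map (F a)) \<Longrightarrow> linear_map (\<lambda>y. lin_ext (\<lambda>a. F a y) x)"
  unfolding linear_map_def lin_ext_def
  by (simp add: smult_add_right sum.distrib) (simp add: smult_sum mult.commute)

lemma linear_map_eq_on_basis:
  assumes "linear_map f" "linear_map g" "\<And>a. f (basis_vec a) = g (basis_vec a)"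
  shows "f x = g x"
proof -
  have "f x = f (lin_ext basis_vec x)"
    by (simp add: lin_ext_basis_vec_id)
  also have "\<dots> = lin_ext (\<lambda>a. f (basis_vec a)) x"
    by (rule linear_map_lin_ext[OF assms(1)])
  also have "\<dots> = lin_ext (\<lambda>a. g (basis_vec a)) x"
    by (simp add: assms(3))
  also have "\<dots> = g (lin_ext basis_vec x)"
    by (rule linear_map_lin_ext[OF assms(2), symmetric])
  finally show ?thesis
    by (simp add: lin_ext_basis_vec_id)
qed

lemma bilinear_eq_on_basis:
  assumes "\<And>y. linear_map (\<lambda>x. f x y)" "\<And>x. linear_map (f x)"
    and "\<And>y. linear_map (\<lambda>x. g x y)" "\<And>x. linear_map (g x)"
    and "\<And>a b. f (basis_vec a) (basis_vec b) = g (basis_vec a) (basis_vec b)"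
  shows "f x y = g x y"
proof (rule linear_map_eq_on_basis[of "\<lambda>x. f x y" "\<lambda>x. g x y"])
  fix a
  show "f (basis_vec a) y = g (basis_vec a) y"
    by (rule linear_map_eq_on_basis[of "f (basis_vec a)"]) (simp_all add: assms)
qed (simp_all add: assms)

lemma trilinear_eq_on_basis:
  assumes "\<And>y z. linear_map (\<lambda>x. f x y z)" "\<And>x z. linear_map (\<lambda>y. f x y z)"
      "\<And>x y. linear_map (f x y)"
    and "\<And>y z. linear_map (\<lambda>x. g x y z)" "\<And>x z. linear_map (\<lambda>y. g x y z)"
      "\<And>x y. linear_map (g x y)"
    and "\<And>a b c. f (basis_vec a) (basis_vec b) (basis_vec c)
                  = g (basis_vec a) (basis_vec b) (basis_vec c)"
  shows "f x y z = g x y z"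
proof (rule bilinear_eq_on_basis[of "\<lambda>x y. f x y z" "\<lambda>x y. g x y z"])
  fix a b
  show "f (basis_vec a) (basis_vec b) z = g (basis_vec a) (basis_vec b) z"
    by (rule linear_map_eq_on_basis[of "f (basis_vec a) (basis_vec b)"]) (simp_all add: assms)
qed (simp_all add: assms)

lemma linear_tprod_left: "linear_map (\<lambda>t. tprod t u)"
  unfolding tprod_def by (rule linear_lin_ext)

lemma linear_tprod_right: "linear_map (tprod t)"
  unfolding tprod_def by (rule linear_map_lin_ext_fun) (rule linear_lin_ext)

lemma tprod_basis_vec [simp]: "tprod (basis_vec as) (basis_vec bs) = basis_vec (as @ bs)"
  by (simp add: tprod_def)

lemma tprod_zero_right [simp]: "tprod t 0 = 0"
  by (simp add: tprod_def)

lemma keys_tprod: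
  fixes t u :: "'a list \<Rightarrow>\<^sub>0 'k::field"
  assumes "cs \<in> Poly_Mapping.keys (tprod t u)"
  obtains as bs where "cs = as @ bs" "as \<in> Poly_Mapping.keys t" "bs \<in> Poly_Mapping.keys u"
proof -
  from assms obtain as where as: "as \<in> Poly_Mapping.keys t"
    and "cs \<in> Poly_Mapping.keys (lin_ext (\<lambda>bs. basis_vec (as @ bs)) u)"
    unfolding tprod_def by (blast dest: keys_lin_ext[THEN subsetD])
  then obtain bs where "bs \<in> Poly_Mapping.keys u"
    and "cs \<in> Poly_Mapping.keys (basis_vec (as @ bs) :: _ \<Rightarrow>\<^sub>0 'k)"
    by (blast dest: keys_lin_ext[THEN subsetD])
  with as show thesis
    using that by simp
qed

lemma tens2_basis_vec [simp]: "tens2 (basis_vec a) (basis_vec b) = basis_vec [a, b]"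
  by (simp add: tens2_def tens1_def)

lemma linear_tens2_left: "linear_map (\<lambda>x. tens2 x y)"
  unfolding tens2_def tens1_def by (rule linear_map_comp[OF linear_tprod_left linear_lin_ext])

lemma linear_tens2_right: "linear_map (tens2 x)"
  unfolding tens2_def tens1_def by (rule linear_map_comp[OF linear_tprod_right linear_lin_ext])

lemma on_first_basis_vec [simp]:
  "on_first f (basis_vec as) = tprod (f (basis_vec (hd as))) (basis_vec (tl as))"
  by (simp add: on_first_def)

lemma on_second_basis_vec [simp]:
  "on_second f (basis_vec as) = tprod (basis_vec [as ! 0]) (f (basis_vec (as ! 1)))"
  by (simp add: on_second_def)

lemma on_first1_basis_vec [simp]:
  "on_first1 g (basis_vec as) = tens2 (g (basis_vec (as ! 0))) (basis_vec (as ! 1))"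
  by (simp add: on_first1_def)

lemma flip23_basis_vec [simp]: "flip23 (basis_vec as) = basis_vec [as ! 0, as ! 2, as ! 1]"
  by (simp add: flip23_def)

lemma proj1_basis_vec [simp]: "proj1 deg (basis_vec a) = (if deg a = 1 then basis_vec a else 0)"
  by (simp add: proj1_def)

lemma linear_on_first: "linear_map (on_first f)"
  unfolding on_first_def by (rule linear_lin_ext)

lemma linear_on_second: "linear_map (on_second f)"
  unfolding on_second_def by (rule linear_lin_ext)

lemma linear_on_first1: "linear_map (on_first1 g)"
  unfolding on_first1_def by (rule linear_lin_ext)

lemma linear_on_first1_fun:
  "(\<And>u. linear_map (\<lambda>y. g y u)) \<Longrightarrow> linear_map (\<lambda>y. on_first1 (g y) t)"
  unfolding on_first1_def
  by (rule linear_map_lin_ext_fun, rule linear_map_comp[OF linear_tens2_left]) simp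

lemma linear_flip23: "linear_map flip23"
  unfolding flip23_def by (rule linear_lin_ext)

lemma linear_proj1: "linear_map (proj1 deg)"
  unfolding proj1_def by (rule linear_lin_ext)

subsection \<open>The free Moor-algebra\<close>

lemma linear_moor_prod_left: "linear_map (\<lambda>x. moor_prod x y)"
  unfolding moor_prod_def by (rule linear_lin_ext)

lemma linear_moor_prod_right: "linear_map (moor_prod x)"
  unfolding moor_prod_def by (rule linear_map_lin_ext_fun) (rule linear_lin_ext)

lemma moor_prod_basis_vec [simp]: "moor_prod (basis_vec a) (basis_vec b) = moor_basis_prod a b"
  by (simp add: moor_prod_def)

lemma moor_prod_zero_left [simp]: "moor_prod 0 y = 0"
  by (simp add: moor_prod_def)

lemma moor_prod_zero_right [simp]: "moor_prod x 0 = 0"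
  by (simp add: moor_prod_def)

lemma moor_prod_right_commute:
  fixes x y z :: "'b \<times> 'b multiset \<Rightarrow>\<^sub>0 'k::field"
  shows "moor_prod (moor_prod x y) z = moor_prod (moor_prod x z) y"
proof (rule trilinear_eq_on_basis[of "\<lambda>x y z. moor_prod (moor_prod x y) z"
                                     "\<lambda>x z y. moor_prod (moor_prod x y) z"])
  fix x y z :: "'b \<times> 'b multiset \<Rightarrow>\<^sub>0 'k"
  show "linear_map (\<lambda>x. moor_prod (moor_prod x y) z)"
    by (rule linear_map_comp[OF linear_moor_prod_left linear_moor_prod_left])
  show "linear_map (\<lambda>y. moor_prod (moor_prod x y) z)"
    by (rule linear_map_comp[OF linear_moor_prod_left linear_moor_prod_right])
  show "linear_map (moor_prod (moor_prod x y))"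
    by (rule linear_moor_prod_right)
  show "linear_map (\<lambda>x. moor_prod (moor_prod x z) y)"
    by (rule linear_map_comp[OF linear_moor_prod_left linear_moor_prod_left])
  show "linear_map (moor_prod (moor_prod x z))"
    by (rule linear_moor_prod_right)
  show "linear_map (\<lambda>z. moor_prod (moor_prod x z) y)"
    by (rule linear_map_comp[OF linear_moor_prod_left linear_moor_prod_right])
qed (simp add: moor_basis_prod_def add_mset_commute)

lemma moor_prod_right_moor_prod:
  fixes x y z :: "'b \<times> 'b multiset \<Rightarrow>\<^sub>0 'k::field"
  shows "moor_prod x (moor_prod y z) = 0"
proof (rule trilinear_eq_on_basis[of "\<lambda>x y z. moor_prod x (moor_prod y z)" "\<lambda>x y z. 0"])
  fix x y z :: "'b \<times> 'b multiset \<Rightarrow>\<^sub>0 'k"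
  show "linear_map (\<lambda>x. moor_prod x (moor_prod y z))"
    by (rule linear_moor_prod_left)
  show "linear_map (\<lambda>y. moor_prod x (moor_prod y z))"
    by (rule linear_map_comp[OF linear_moor_prod_right linear_moor_prod_left])
  show "linear_map (\<lambda>z. moor_prod x (moor_prod y z))"
    by (rule linear_map_comp[OF linear_moor_prod_right linear_moor_prod_right])
qed (simp_all add: linear_map_const_zero moor_basis_prod_def)

lemma moor_prod_homog:
  fixes x y :: "'b \<times> 'b multiset \<Rightarrow>\<^sub>0 'k::field"
  assumes "x \<in> homog moor_deg p" "y \<in> homog moor_deg q"
  shows "moor_prod x y \<in> homog moor_deg (p + q)"
  unfolding homog_def
proof (intro CollectI ballI)
  fix c assume "c \<in> Poly_Mapping.keys (moor_prod x y)"
  then obtain a b where "a \<in> Poly_Mapping.keys x" "b \<in> Poly_Mapping.keys y"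
    and "c \<in> Poly_Mapping.keys (moor_basis_prod a b :: _ \<Rightarrow>\<^sub>0 'k)"
    unfolding moor_prod_def by (blast dest: keys_lin_ext[THEN subsetD])
  moreover from this(3) have "moor_deg c = moor_deg a + moor_deg b"
    by (auto simp: moor_basis_prod_def moor_deg_def split: if_splits)
  ultimately show "moor_deg c = p + q"
    using assms by (simp add: homog_def)
qed

subsection \<open>The cooperation\<close>

fun moor_cop_basis :: "'b \<times> 'b multiset \<Rightarrow> (('b \<times> 'b multiset) list \<Rightarrow>\<^sub>0 'k::field)" where
  "moor_cop_basis (v, m) =
     (\<Sum>w\<in>set_mset m. smult (of_nat (count m w)) (basis_vec [(v, m - {#w#}), (w, {#})]))"

definition moor_cop :: "('b \<times> 'b multiset \<Rightarrow>\<^sub>0 'k::field) \<Rightarrow> (('b \<times> 'b multiset) list \<Rightarrow>\<^sub>0 'k)" where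
  "moor_cop = lin_ext moor_cop_basis"

lemma moor_cop_basis_vec [simp]: "moor_cop (basis_vec a) = moor_cop_basis a"
  by (simp add: moor_cop_def)

lemma linear_moor_cop: "linear_map moor_cop"
  unfolding moor_cop_def by (rule linear_lin_ext)

lemma moor_cop_basis_superset:
  assumes "finite S" "set_mset m \<subseteq> S"
  shows "moor_cop_basis (v, m)
    = (\<Sum>w\<in>S. smult (of_nat (count m w)) (basis_vec [(v, m - {#w#}), (w, {#})]))"
  unfolding moor_cop_basis.simps
  by (rule sum.mono_neutral_left) (use assms in \<open>auto simp: not_in_iff\<close>)

lemma keys_moor_cop_basis:
  assumes "as \<in> Poly_Mapping.keys (moor_cop_basis (v, m) :: _ \<Rightarrow>\<^sub>0 'k::field)"
  obtains w where "w \<in># m" "as = [(v, m - {#w#}), (w, {#})]"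
proof -
  have "as \<in> (\<Union>w\<in>set_mset m. Poly_Mapping.keys
          (smult (of_nat (count m w)) (basis_vec [(v, m - {#w#}), (w, {#})]) :: _ \<Rightarrow>\<^sub>0 'k))"
    using assms keys_sum by force
  then show thesis
    using that keys_smult by fastforce
qed

lemma keys_moor_cop:
  assumes "as \<in> Poly_Mapping.keys (moor_cop x :: _ \<Rightarrow>\<^sub>0 'k::field)"
  obtains v m w where "(v, m) \<in> Poly_Mapping.keys x" "w \<in># m" "as = [(v, m - {#w#}), (w, {#})]"
proof -
  obtain v m where vm: "(v, m) \<in> Poly_Mapping.keys x"
    and as: "as \<in> Poly_Mapping.keys (moor_cop_basis (v, m) :: _ \<Rightarrow>\<^sub>0 'k)"
    using assms keys_lin_ext[of moor_cop_basis x] unfolding moor_cop_def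
    by (auto simp del: moor_cop_basis.simps)
  from as obtain w where "w \<in># m" "as = [(v, m - {#w#}), (w, {#})]"
    by (rule keys_moor_cop_basis)
  with vm show thesis by (rule that)
qed

lemma moor_cop_length: "as \<in> Poly_Mapping.keys (moor_cop x) \<Longrightarrow> length as = 2"
  by (auto elim: keys_moor_cop)

lemma on_second_moor_cop:
  fixes x :: "'b \<times> 'b multiset \<Rightarrow>\<^sub>0 'k::field"
  shows "on_second moor_cop (moor_cop x) = 0"
proof (rule linear_map_eq_on_basis[of "\<lambda>x. on_second moor_cop (moor_cop x)" "\<lambda>x. 0"])
  show "linear_map (\<lambda>x. on_second moor_cop (moor_cop x))"
    by (rule linear_map_comp[OF linear_on_second linear_moor_cop])
  fix a :: "'b \<times> 'b multiset"
  show "on_second moor_cop (moor_cop (basis_vec a)) = 0"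
    by (cases a) (simp add: linear_map_sum[OF linear_on_second] linear_map_smult[OF linear_on_second])
qed (rule linear_map_const_zero)

lemma on_first_moor_cop_basis:
  "on_first moor_cop (moor_cop_basis (v, m) :: _ \<Rightarrow>\<^sub>0 'k::field) =
    (\<Sum>w\<in>set_mset m. \<Sum>w'\<in>set_mset m. smult (of_nat (count m w * count (m - {#w#}) w'))
       (basis_vec [(v, m - {#w#} - {#w'#}), (w', {#}), (w, {#})]))" (is "_ = ?rhs")
proof -
  have "on_first moor_cop (moor_cop_basis (v, m) :: _ \<Rightarrow>\<^sub>0 'k) =
    (\<Sum>w\<in>set_mset m. smult (of_nat (count m w))
       (tprod (moor_cop_basis (v, m - {#w#})) (basis_vec [(w, {#})])))"
    unfolding moor_cop_basis.simps[of v m]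
    by (simp add: linear_map_sum[OF linear_on_first] linear_map_smult[OF linear_on_first]
        del: moor_cop_basis.simps)
  also have "\<dots> = ?rhs"
  proof (rule sum.cong[OF refl])
    fix w assume "w \<in> set_mset m"
    have "moor_cop_basis (v, m - {#w#}) = (\<Sum>w'\<in>set_mset m.
        smult (of_nat (count (m - {#w#}) w')) (basis_vec [(v, m - {#w#} - {#w'#}), (w', {#})]) :: _ \<Rightarrow>\<^sub>0 'k)"
      by (rule moor_cop_basis_superset) (auto dest: in_diffD)
    then show "smult (of_nat (count m w))
        (tprod (moor_cop_basis (v, m - {#w#})) (basis_vec [(w, {#})])) =
      (\<Sum>w'\<in>set_mset m. smult (of_nat (count m w * count (m - {#w#}) w'))
         (basis_vec [(v, m - {#w#} - {#w'#}), (w', {#}), (w, {#})]) :: _ \<Rightarrow>\<^sub>0 'k)"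
      by (simp add: linear_map_sum[OF linear_tprod_left] linear_map_smult[OF linear_tprod_left]
          smult_sum del: moor_cop_basis.simps)
  qed
  finally show ?thesis .
qed

lemma count_mult_count_diff_commute:
  "count m w * count (m - {#w#}) w' = count m w' * count (m - {#w'#}) w"
  by (cases "w = w'") auto

lemma flip23_on_first_moor_cop:
  fixes x :: "'b \<times> 'b multiset \<Rightarrow>\<^sub>0 'k::field"
  shows "on_first moor_cop (moor_cop x) = flip23 (on_first moor_cop (moor_cop x))"
proof (rule linear_map_eq_on_basis[of "\<lambda>x. on_first moor_cop (moor_cop x)"
                                     "\<lambda>x. flip23 (on_first moor_cop (moor_cop x))"])
  show "linear_map (\<lambda>x. on_first moor_cop (moor_cop x))"
    by (rule linear_map_comp[OF linear_on_first linear_moor_cop])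
  show "linear_map (\<lambda>x. flip23 (on_first moor_cop (moor_cop x)))"
    by (rule linear_map_comp[OF linear_flip23 linear_map_comp[OF linear_on_first linear_moor_cop]])
  fix a :: "'b \<times> 'b multiset"
  obtain v m where a: "a = (v, m)" by fastforce
  have "flip23 (on_first moor_cop (moor_cop (basis_vec a))) =
      (\<Sum>w\<in>set_mset m. \<Sum>w'\<in>set_mset m. smult (of_nat (count m w * count (m - {#w#}) w'))
         (basis_vec [(v, m - {#w#} - {#w'#}), (w, {#}), (w', {#})]) :: _ \<Rightarrow>\<^sub>0 'k)"
    by (simp add: a on_first_moor_cop_basis linear_map_sum[OF linear_flip23]
        linear_map_smult[OF linear_flip23] del: moor_cop_basis.simps)
  also have "\<dots> = (\<Sum>w'\<in>set_mset m. \<Sum>w\<in>set_mset m.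
         smult (of_nat (count m w * count (m - {#w#}) w'))
         (basis_vec [(v, m - {#w#} - {#w'#}), (w, {#}), (w', {#})]))"
    by (rule sum.swap)
  also have "\<dots> = on_first moor_cop (moor_cop (basis_vec a))"
    unfolding a moor_cop_basis_vec on_first_moor_cop_basis
    by (intro sum.cong refl) (simp only: count_mult_count_diff_commute diff_right_commute)
  finally show "on_first moor_cop (moor_cop (basis_vec a :: _ \<Rightarrow>\<^sub>0 'k))
      = flip23 (on_first moor_cop (moor_cop (basis_vec a)))"
    by (rule sym)
qed

lemma count_add_mset_smult_basis_vec:
  "smult (of_nat (count (add_mset v' m) w))
     (basis_vec [(v, add_mset v' m - {#w#}), (w, {#})] :: _ \<Rightarrow>\<^sub>0 'k::field)
   = smult (of_nat (count m w)) (basis_vec [(v, add_mset v' (m - {#w#})), (w, {#})])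
     + (if w = v' then basis_vec [(v, m), (v', {#})] else 0)"
proof (cases "w = v'")
  case True
  show ?thesis
  proof (cases "w \<in># m")
    case True
    then have "add_mset v' (m - {#w#}) = m"
      using \<open>w = v'\<close> by (simp add: insert_DiffM)
    then show ?thesis
      using \<open>w = v'\<close> by (simp add: smult_add_left add.commute)
  next
    case False
    then show ?thesis
      using \<open>w = v'\<close> by (simp add: not_in_iff)
  qed
qed simp

lemma moor_cop_basis_add_mset:
  "moor_cop_basis (v, add_mset v' m) = basis_vec [(v, m), (v', {#})]
     + on_first1 (\<lambda>u. moor_prod u (basis_vec (v', {#}))) (moor_cop_basis (v, m) :: _ \<Rightarrow>\<^sub>0 'k::field)"
proof -
  let ?S = "insert v' (set_mset m)"
  have "moor_cop_basis (v, add_mset v' m) = (\<Sum>w\<in>?S. smult (of_nat (count (add_mset v' m) w))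
      (basis_vec [(v, add_mset v' m - {#w#}), (w, {#})]) :: _ \<Rightarrow>\<^sub>0 'k)"
    by simp
  also have "\<dots> = (\<Sum>w\<in>?S. (if w = v' then basis_vec [(v, m), (v', {#})] else 0))
      + (\<Sum>w\<in>?S. smult (of_nat (count m w)) (basis_vec [(v, add_mset v' (m - {#w#})), (w, {#})]))"
    by (simp only: count_add_mset_smult_basis_vec sum.distrib add.commute)
  also have "(\<Sum>w\<in>?S. (if w = v' then basis_vec [(v, m), (v', {#})] else 0))
      = basis_vec [(v, m), (v', {#})]"
    by (simp add: sum.delta')
  also have "(\<Sum>w\<in>?S. smult (of_nat (count m w)) (basis_vec [(v, add_mset v' (m - {#w#})), (w, {#})]))
      = (\<Sum>w\<in>set_mset m. smult (of_nat (count m w))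
          (basis_vec [(v, add_mset v' (m - {#w#})), (w, {#})]) :: _ \<Rightarrow>\<^sub>0 'k)"
    by (rule sum.mono_neutral_right) (auto simp: not_in_iff)
  also have "\<dots> = on_first1 (\<lambda>u. moor_prod u (basis_vec (v', {#}))) (moor_cop_basis (v, m))"
    by (simp add: moor_basis_prod_def linear_map_sum[OF linear_on_first1]
        linear_map_smult[OF linear_on_first1])
  finally show ?thesis .
qed

lemma moor_cop_moor_basis_prod:
  "moor_cop (moor_basis_prod a b :: _ \<Rightarrow>\<^sub>0 'k::field)
     = tens2 (basis_vec a) (proj1 moor_deg (basis_vec b))
       + on_first1 (\<lambda>u. moor_prod u (basis_vec b)) (moor_cop_basis a)"
proof -
  obtain v m v' m' where ab: "a = (v, m)" "b = (v', m')" by fastforce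
  show ?thesis
  proof (cases "m' = {#}")
    case True
    then show ?thesis
      by (simp add: ab moor_basis_prod_def moor_deg_def moor_cop_basis_add_mset del: moor_cop_basis.simps)
  next
    case False
    then show ?thesis
      by (simp add: ab moor_basis_prod_def moor_deg_def linear_map_zero[OF linear_moor_cop]
          linear_map_zero[OF linear_tens2_right] linear_map_zero[OF linear_tens2_left]
          linear_map_sum[OF linear_on_first1] linear_map_smult[OF linear_on_first1])
  qed
qed

lemma moor_cop_moor_prod:
  fixes x y :: "'b \<times> 'b multiset \<Rightarrow>\<^sub>0 'k::field"
  shows "moor_cop (moor_prod x y) = tens2 x (proj1 moor_deg y) + on_first1 (\<lambda>u. moor_prod u y) (moor_cop x)"
proof (rule bilinear_eq_on_basis[of "\<lambda>x y. moor_cop (moor_prod x y)"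
      "\<lambda>x y. tens2 x (proj1 moor_deg y) + on_first1 (\<lambda>u. moor_prod u y) (moor_cop x)"])
  fix x y :: "'b \<times> 'b multiset \<Rightarrow>\<^sub>0 'k"
  show "linear_map (\<lambda>x. moor_cop (moor_prod x y))"
    by (rule linear_map_comp[OF linear_moor_cop linear_moor_prod_left])
  show "linear_map (\<lambda>y. moor_cop (moor_prod x y))"
    by (rule linear_map_comp[OF linear_moor_cop linear_moor_prod_right])
  show "linear_map (\<lambda>x. tens2 x (proj1 moor_deg y) + on_first1 (\<lambda>u. moor_prod u y) (moor_cop x))"
    by (rule linear_map_add[OF linear_tens2_left linear_map_comp[OF linear_on_first1 linear_moor_cop]])
  show "linear_map (\<lambda>y. tens2 x (proj1 moor_deg y) + on_first1 (\<lambda>u. moor_prod u y) (moor_cop x))"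
    by (rule linear_map_add[OF linear_map_comp[OF linear_tens2_right linear_proj1]
          linear_on_first1_fun[OF linear_moor_prod_right]])
qed (simp add: moor_cop_moor_basis_prod del: proj1_basis_vec moor_cop_basis.simps)

lemma lookup_moor_cop_basis:
  assumes "w \<in># m"
  shows "Poly_Mapping.lookup (moor_cop_basis a :: _ \<Rightarrow>\<^sub>0 'k::field) [(v, m - {#w#}), (w, {#})]
    = (if a = (v, m) then of_nat (count m w) else 0)"
proof -
  obtain v' m' where a: "a = (v', m')" by fastforce
  have "Poly_Mapping.lookup (moor_cop_basis a :: _ \<Rightarrow>\<^sub>0 'k) [(v, m - {#w#}), (w, {#})]
      = (\<Sum>u\<in>set_mset m'. if u = w then
           (if v' = v \<and> m' - {#w#} = m - {#w#} then of_nat (count m' u) else 0) else 0)"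
    unfolding a moor_cop_basis.simps lookup_sum by (rule sum.cong) (auto simp: lookup_basis_vec)
  also have "\<dots> = (if w \<in># m' \<and> v' = v \<and> m' - {#w#} = m - {#w#} then of_nat (count m' w) else 0)"
    by (simp add: sum.delta)
  also have "\<dots> = (if a = (v, m) then of_nat (count m w) else 0)"
    using assms by (auto simp: a dest: multi_member_split)
  finally show ?thesis .
qed

lemma lookup_moor_cop:
  assumes "w \<in># m"
  shows "Poly_Mapping.lookup (moor_cop x) [(v, m - {#w#}), (w, {#})]
    = Poly_Mapping.lookup x (v, m) * of_nat (count m w)"
proof -
  have "Poly_Mapping.lookup (moor_cop x) [(v, m - {#w#}), (w, {#})]
      = (\<Sum>a\<in>Poly_Mapping.keys x. if a = (v, m) then Poly_Mapping.lookup x a * of_nat (count m w) else 0)"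
    unfolding moor_cop_def lookup_lin_ext
    by (rule sum.cong) (auto simp: lookup_moor_cop_basis[OF assms] simp del: moor_cop_basis.simps)
  then show ?thesis
    by (simp add: sum.delta in_keys_iff)
qed

lemma homog_moor_deg_1_if_moor_cop_eq_0:
  fixes x :: "'b \<times> 'b multiset \<Rightarrow>\<^sub>0 'k::field_char_0"
  assumes "moor_cop x = 0"
  shows "x \<in> homog moor_deg 1"
proof (rule ccontr)
  assume "x \<notin> homog moor_deg 1"
  then obtain v m w where vm: "(v, m) \<in> Poly_Mapping.keys x" and w: "w \<in># m"
    unfolding homog_def moor_deg_def by fastforce
  have "Poly_Mapping.lookup x (v, m) * of_nat (count m w) = (0 :: 'k)"
    using lookup_moor_cop[OF w, of x v] assms by simp
  with vm w show False
    by (auto simp: in_keys_iff count_eq_zero_iff)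
qed

definition first_factor_size_below :: "nat \<Rightarrow> (('b \<times> 'b multiset) list \<Rightarrow>\<^sub>0 'k::field) \<Rightarrow> bool" where
  "first_factor_size_below n t \<longleftrightarrow> (\<forall>as\<in>Poly_Mapping.keys t. as \<noteq> [] \<and> size (snd (hd as)) < n)"

lemma first_factor_size_below_0: "first_factor_size_below 0 t \<Longrightarrow> t = 0"
  unfolding first_factor_size_below_def by auto

lemma moor_cop_first_factor_size_below:
  assumes "\<And>v m. (v, m) \<in> Poly_Mapping.keys x \<Longrightarrow> size m \<le> n"
  shows "first_factor_size_below n (moor_cop x)"
  unfolding first_factor_size_below_def
proof
  fix as assume "as \<in> Poly_Mapping.keys (moor_cop x)"
  then obtain v m w where "(v, m) \<in> Poly_Mapping.keys x" "w \<in># m" "as = [(v, m - {#w#}), (w, {#})]"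
    by (rule keys_moor_cop)
  then show "as \<noteq> [] \<and> size (snd (hd as)) < n"
    using assms size_Diff1_less[of w m] by fastforce
qed

lemma on_first_moor_cop_first_factor_size_below:
  fixes t :: "('b \<times> 'b multiset) list \<Rightarrow>\<^sub>0 'k::field"
  assumes "first_factor_size_below (Suc n) t"
  shows "first_factor_size_below n (on_first moor_cop t)"
  unfolding first_factor_size_below_def
proof
  fix bs assume "bs \<in> Poly_Mapping.keys (on_first moor_cop t)"
  then obtain as where as: "as \<in> Poly_Mapping.keys t"
    and bs_keys: "bs \<in> Poly_Mapping.keys
                    (tprod (moor_cop (basis_vec (hd as)) :: _ \<Rightarrow>\<^sub>0 'k) (basis_vec (tl as)))"
    unfolding on_first_def by (blast dest: keys_lin_ext[THEN subsetD])
  from bs_keys obtain cs ds where bs: "bs = cs @ ds"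
    and cs: "cs \<in> Poly_Mapping.keys (moor_cop (basis_vec (hd as)) :: _ \<Rightarrow>\<^sub>0 'k)"
    by (rule keys_tprod)
  have "size (snd (hd as)) < Suc n"
    using as assms by (simp add: first_factor_size_below_def)
  then have "first_factor_size_below n (moor_cop (basis_vec (hd as)) :: _ \<Rightarrow>\<^sub>0 'k)"
    by (intro moor_cop_first_factor_size_below) (auto simp: prod_eq_iff)
  with cs bs show "bs \<noteq> [] \<and> size (snd (hd bs)) < n"
    by (auto simp: first_factor_size_below_def)
qed

lemma iter_moor_cop_vanishes:
  fixes x :: "'b \<times> 'b multiset \<Rightarrow>\<^sub>0 'k::field"
  shows "\<exists>r\<ge>1. iter_cop moor_cop r x = 0"
proof -
  define n where "n = (\<Sum>a\<in>Poly_Mapping.keys x. size (snd a))"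
  have "first_factor_size_below (k + j) t \<Longrightarrow> first_factor_size_below k ((on_first moor_cop ^^ j) t)"
    for k j and t :: "('b \<times> 'b multiset) list \<Rightarrow>\<^sub>0 'k"
    by (induction j arbitrary: k t) (simp_all add: on_first_moor_cop_first_factor_size_below)
  moreover have "first_factor_size_below n (moor_cop x)"
    unfolding n_def
    by (rule moor_cop_first_factor_size_below) (auto dest: member_le_sum[where f = "\<lambda>a. size (snd a)"])
  ultimately have "(on_first moor_cop ^^ n) (moor_cop x) = 0"
    by (metis add_0 first_factor_size_below_0)
  then have "iter_cop moor_cop (n + 1) x = 0"
    by (simp add: iter_cop_def)
  then show ?thesis by (intro exI[of _ "n + 1"]) simp
qed

lemma moor_bialgebra_moor_cop:
  "moor_bialgebra moor_deg moor_prod (moor_cop :: ('b \<times> 'b multiset \<Rightarrow>\<^sub>0 'k::field) \<Rightarrow> _)"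
  unfolding moor_bialgebra_def bilinear_op_def
  by (intro conjI allI impI ballI)
     (simp_all add: moor_deg_def linear_moor_prod_left linear_moor_prod_right moor_prod_homog
        moor_prod_right_commute moor_prod_right_moor_prod linear_moor_cop moor_cop_length
        on_second_moor_cop flip23_on_first_moor_cop[symmetric] moor_cop_moor_prod)

theorem theorem4p2:
  "\<exists>D :: ('b \<times> 'b multiset \<Rightarrow>\<^sub>0 'k::field_char_0) \<Rightarrow> (('b \<times> 'b multiset) list \<Rightarrow>\<^sub>0 'k).
     connected_moor_bialgebra moor_deg moor_prod D"
proof
  show "connected_moor_bialgebra moor_deg moor_prod (moor_cop :: ('b \<times> 'b multiset \<Rightarrow>\<^sub>0 'k) \<Rightarrow> _)"
    unfolding connected_moor_bialgebra_def
    using moor_bialgebra_moor_cop homog_moor_deg_1_if_moor_cop_eq_0 iter_moor_cop_vanishes by blast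
qed

end
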